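(* Let $G$ be a finite group and $X$ a finite $G$-poset. For all $n\ge 1$ there is an isomorphism of posets $X^{(n)}/G\cong(X'/G)^{(n-1)}$. If $X$ satisfies property (B), then $X^{(n)}/G\cong(X/G)^{(n)}$ for all $n\ge 0$.
   Context: A finite $G$-poset is a finite poset with a right action of $G$ by order-preserving maps. For a poset $Y$, $Y'$ is the poset of non-empty chains of $Y$ ordered by inclusion (with the induced componentwise $G$-action), and $Y^{(n)}$ is the $n$-th iterated subdivision ($Y^{(0)}=Y$, $Y^{(n)}=(Y^{(n-1)})'$). For a $G$-poset $Y$, $Y/G$ is the orbit poset: $\overline{y}\le\overline{z}$ iff some representatives satisfy $y_1\le z_1$. $X$ satisfies property (B) if whenever $\{v_0,\dots,v_n\}$ and $\{v_0^{g_0},\dots,v_n^{g_n}\}$ are both chains of $X$ with $g_i\in G$, there is $g\in G$ with $v_i^{g_i}=v_i^g$ for all $i$. *)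

theory Defs
  imports "HOL-Algebra.Group" "HOL-Library.FSet"
begin

type_synonym 'a poset = "'a set \<times> ('a \<Rightarrow> 'a \<Rightarrow> bool)"

definition is_poset :: "'a set \<Rightarrow> ('a \<Rightarrow> 'a \<Rightarrow> bool) \<Rightarrow> bool" where
  "is_poset C r \<longleftrightarrow> (\<forall>x\<in>C. r x x) \<and>
     (\<forall>x\<in>C. \<forall>y\<in>C. r x y \<and> r y x \<longrightarrow> x = y) \<and>
     (\<forall>x\<in>C. \<forall>y\<in>C. \<forall>z\<in>C. r x y \<and> r y z \<longrightarrow> r x z)"

definition is_chain :: "'a set \<Rightarrow> ('a \<Rightarrow> 'a \<Rightarrow> bool) \<Rightarrow> 'a set \<Rightarrow> bool" where
  "is_chain C r S \<longleftrightarrow> S \<subseteq> C \<and> (\<forall>x\<in>S. \<forall>y\<in>S. r x y \<or> r y x)"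

text \<open>Hereditarily finite sets over atoms: a uniform type hosting all iterated subdivisions.\<close>
datatype 'a hf = Atom 'a | HSet "'a hf fset"

definition atoms :: "'a poset \<Rightarrow> 'a hf poset" where
  "atoms P = (Atom ` fst P, \<lambda>u v. \<exists>x y. u = Atom x \<and> v = Atom y \<and> snd P x y)"

definition subdiv :: "'a hf poset \<Rightarrow> 'a hf poset" where
  "subdiv P = ({HSet s | s. s \<noteq> {||} \<and> is_chain (fst P) (snd P) (fset s)},
               \<lambda>u v. \<exists>s t. u = HSet s \<and> v = HSet t \<and> s |\<subseteq>| t)"

definition subdiv_n :: "nat \<Rightarrow> 'a hf poset \<Rightarrow> 'a hf poset" where
  "subdiv_n n P = (subdiv ^^ n) P"

definition hf_act :: "('a \<Rightarrow> 'g \<Rightarrow> 'a) \<Rightarrow> 'a hf \<Rightarrow> 'g \<Rightarrow> 'a hf" where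
  "hf_act act y g = map_hf (\<lambda>x. act x g) y"

definition orbit_poset :: "('g, 'm) monoid_scheme \<Rightarrow> ('b \<Rightarrow> 'g \<Rightarrow> 'b) \<Rightarrow> 'b poset \<Rightarrow> 'b set poset" where
  "orbit_poset G act P = ((\<lambda>y. (\<lambda>g. act y g) ` carrier G) ` fst P,
      \<lambda>O1 O2. \<exists>y\<in>O1. \<exists>z\<in>O2. snd P y z)"

definition poset_iso :: "'a poset \<Rightarrow> 'b poset \<Rightarrow> bool" where
  "poset_iso P Q \<longleftrightarrow> (\<exists>f. bij_betw f (fst P) (fst Q) \<and>
      (\<forall>x\<in>fst P. \<forall>y\<in>fst P. snd P x y \<longleftrightarrow> snd Q (f x) (f y)))"

definition G_poset :: "('g, 'm) monoid_scheme \<Rightarrow> ('a \<Rightarrow> 'g \<Rightarrow> 'a) \<Rightarrow> 'a set \<Rightarrow> ('a \<Rightarrow> 'a \<Rightarrow> bool) \<Rightarrow> bool" where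
  "G_poset G act X r \<longleftrightarrow> is_poset X r \<and>
     (\<forall>x\<in>X. \<forall>g\<in>carrier G. act x g \<in> X) \<and>
     (\<forall>x\<in>X. act x \<one>\<^bsub>G\<^esub> = x) \<and>
     (\<forall>x\<in>X. \<forall>g\<in>carrier G. \<forall>h\<in>carrier G. act (act x g) h = act x (g \<otimes>\<^bsub>G\<^esub> h)) \<and>
     (\<forall>x\<in>X. \<forall>y\<in>X. \<forall>g\<in>carrier G. r x y \<longrightarrow> r (act x g) (act y g))"

definition property_B :: "('g, 'm) monoid_scheme \<Rightarrow> ('a \<Rightarrow> 'g \<Rightarrow> 'a) \<Rightarrow> 'a set \<Rightarrow> ('a \<Rightarrow> 'a \<Rightarrow> bool) \<Rightarrow> bool" where
  "property_B G act X r \<longleftrightarrow>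
     (\<forall>(n::nat) (v::nat \<Rightarrow> 'a) (gs::nat \<Rightarrow> 'g).
        inj_on v {..n} \<and> (\<forall>i\<in>{..n}. gs i \<in> carrier G) \<and>
        is_chain X r (v ` {..n}) \<and> is_chain X r ((\<lambda>i. act (v i) (gs i)) ` {..n})
        \<longrightarrow> (\<exists>g\<in>carrier G. \<forall>i\<in>{..n}. act (v i) (gs i) = act (v i) g))"

end

theory Submission
  imports Defs "HOL-Algebra.Multiplicative_Group"
begin

(* A finite group cannot move an element of a poset to a comparable one: x <= x h gives
   x <= x h <= x h^2 <= ... <= x h^(ord h) = x.  Consequently the orbit relation of a finite
   G-poset is a partial order, and every subdivision Y' has property (B): if the translates
   v_i g_i of a chain of chains v_i form a chain, they all lie in the largest one v_m g_m,
   and g_m alone already moves every v_i to v_i g_i.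

   If Y has property (B), sending a chain of Y to the chain of its orbits induces an
   isomorphism Y'/G = (Y/G)': a chain of orbits lifts to a chain of Y by choosing
   representatives from the top down, and (B) turns an inclusion between the orbit sets of
   two chains into an inclusion of one chain in a translate of the other.  Iterating this
   along X^(n), starting from X' (which always has (B)) or, under (B), from X itself, gives
   both statements. *)

lemma poset_isoI_inverses:
  assumes "f ` fst P \<subseteq> fst Q" "g ` fst Q \<subseteq> fst P"
    and "\<And>x. x \<in> fst P \<Longrightarrow> g (f x) = x" "\<And>y. y \<in> fst Q \<Longrightarrow> f (g y) = y"
    and "monotone_on (fst P) (snd P) (snd Q) f" "monotone_on (fst Q) (snd Q) (snd P) g"
  shows "poset_iso P Q"
  unfolding poset_iso_def
proof (intro exI conjI)
  show "bij_betw f (fst P) (fst Q)"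
    by (rule bij_betw_byWitness[where f' = g]) (use assms(1-4) in auto)
  show "\<forall>x\<in>fst P. \<forall>y\<in>fst P. snd P x y \<longleftrightarrow> snd Q (f x) (f y)"
  proof (intro ballI iffI)
    fix x y assume x: "x \<in> fst P" and y: "y \<in> fst P"
    show "snd Q (f x) (f y)" if "snd P x y"
      using monotone_onD[OF assms(5) x y that] .
    show "snd P x y" if "snd Q (f x) (f y)"
      using monotone_onD[OF assms(6) _ _ that] assms(1,3) x y by (simp add: image_subset_iff)
  qed
qed

lemma poset_isoE_inverses:
  assumes "poset_iso P Q"
  obtains f g where "f ` fst P \<subseteq> fst Q" "g ` fst Q \<subseteq> fst P"
    "\<And>x. x \<in> fst P \<Longrightarrow> g (f x) = x" "\<And>y. y \<in> fst Q \<Longrightarrow> f (g y) = y"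
    "monotone_on (fst P) (snd P) (snd Q) f" "monotone_on (fst Q) (snd Q) (snd P) g"
proof -
  obtain f where f: "bij_betw f (fst P) (fst Q)"
    and ord: "\<forall>x\<in>fst P. \<forall>y\<in>fst P. snd P x y \<longleftrightarrow> snd Q (f x) (f y)"
    using assms unfolding poset_iso_def by blast
  let ?g = "inv_into (fst P) f"
  have g_into: "?g ` fst Q \<subseteq> fst P" and f_g: "\<And>y. y \<in> fst Q \<Longrightarrow> f (?g y) = y"
    using f by (auto simp: bij_betw_def inv_into_into f_inv_into_f)
  show thesis
  proof (rule that[of f ?g])
    show "f ` fst P \<subseteq> fst Q" "\<And>x. x \<in> fst P \<Longrightarrow> ?g (f x) = x"
      using f by (auto simp: bij_betw_def)
    show "monotone_on (fst P) (snd P) (snd Q) f"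
      using ord by (simp add: monotone_on_def)
    show "monotone_on (fst Q) (snd Q) (snd P) ?g"
    proof (rule monotone_onI)
      fix y y' assume "y \<in> fst Q" "y' \<in> fst Q" "snd Q y y'"
      then show "snd P (?g y) (?g y')"
        using ord g_into f_g by (metis image_subset_iff)
    qed
  qed (use g_into f_g in auto)
qed

lemma poset_iso_sym: "poset_iso P Q \<Longrightarrow> poset_iso Q P"
  by (elim poset_isoE_inverses) (rule poset_isoI_inverses)

lemma poset_iso_trans [trans]:
  assumes "poset_iso P Q" "poset_iso Q R"
  shows "poset_iso P R"
proof -
  obtain f f' where f: "f ` fst P \<subseteq> fst Q" "f' ` fst Q \<subseteq> fst P"
    "\<And>x. x \<in> fst P \<Longrightarrow> f' (f x) = x" "\<And>y. y \<in> fst Q \<Longrightarrow> f (f' y) = y"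
    "monotone_on (fst P) (snd P) (snd Q) f" "monotone_on (fst Q) (snd Q) (snd P) f'"
    using assms(1) by (rule poset_isoE_inverses) blast
  obtain g g' where g: "g ` fst Q \<subseteq> fst R" "g' ` fst R \<subseteq> fst Q"
    "\<And>x. x \<in> fst Q \<Longrightarrow> g' (g x) = x" "\<And>y. y \<in> fst R \<Longrightarrow> g (g' y) = y"
    "monotone_on (fst Q) (snd Q) (snd R) g" "monotone_on (fst R) (snd R) (snd Q) g'"
    using assms(2) by (rule poset_isoE_inverses) blast
  show ?thesis
  proof (rule poset_isoI_inverses[where f = "g \<circ> f" and g = "f' \<circ> g'"])
    show "monotone_on (fst P) (snd P) (snd R) (g \<circ> f)"
      using f(1,5) g(5) by (intro monotone_on_o) auto
    show "monotone_on (fst R) (snd R) (snd P) (f' \<circ> g')"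
      using g(2,6) f(6) by (intro monotone_on_o) auto
  qed (use f g in \<open>auto simp: image_subset_iff\<close>)
qed

lemma poset_iso_atoms: "poset_iso P (atoms P)"
  by (rule poset_isoI_inverses[where f = Atom and g = "\<lambda>u. case u of Atom x \<Rightarrow> x"])
    (auto simp: atoms_def monotone_on_def)

lemma poset_iso_atoms_cong: "poset_iso P Q \<Longrightarrow> poset_iso (atoms P) (atoms Q)"
  by (meson poset_iso_atoms poset_iso_sym poset_iso_trans)

(* Only meaningful on elements HSet s of a subdivision; on an atom the case expression is
   unspecified. *)
definition chain_image :: "('a hf \<Rightarrow> 'b hf) \<Rightarrow> 'a hf \<Rightarrow> 'b hf" where
  "chain_image f u = HSet (f |`| (case u of HSet s \<Rightarrow> s))"

lemma chain_image_HSet [simp]: "chain_image f (HSet s) = HSet (f |`| s)"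
  by (simp add: chain_image_def)

lemma subdiv_mem_iff:
  "u \<in> fst (subdiv P) \<longleftrightarrow> (\<exists>s. u = HSet s \<and> s \<noteq> {||} \<and> is_chain (fst P) (snd P) (fset s))"
  by (auto simp: subdiv_def)

lemma subdiv_le_iff [simp]: "snd (subdiv P) (HSet s) (HSet t) \<longleftrightarrow> fset s \<subseteq> fset t"
  by (simp add: subdiv_def less_eq_fset.rep_eq)

lemma is_chain_image:
  assumes "is_chain A r S" "f ` A \<subseteq> B" "monotone_on A r r' f"
  shows "is_chain B r' (f ` S)"
  using assms unfolding is_chain_def monotone_on_def by blast

lemma chain_image_in_subdiv:
  assumes "u \<in> fst (subdiv P)" "f ` fst P \<subseteq> fst Q" "monotone_on (fst P) (snd P) (snd Q) f"
  shows "chain_image f u \<in> fst (subdiv Q)"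
  using assms is_chain_image by (fastforce simp: subdiv_mem_iff fimage.rep_eq)

lemma chain_image_mono:
  "snd (subdiv P) u v \<Longrightarrow> snd (subdiv Q) (chain_image f u) (chain_image f v)"
  by (auto simp: subdiv_def fimage_mono)

lemma chain_image_cong:
  assumes "u \<in> fst (subdiv P)" "\<And>x. x \<in> fst P \<Longrightarrow> f x = g x"
  shows "chain_image f u = chain_image g u"
  using assms unfolding subdiv_mem_iff is_chain_def by (force intro!: fset.map_cong)

lemma chain_image_comp: "u \<in> fst (subdiv P) \<Longrightarrow> chain_image f (chain_image g u) = chain_image (f \<circ> g) u"
  by (auto simp: subdiv_mem_iff)

lemma chain_image_id:
  assumes "u \<in> fst (subdiv P)" "\<And>x. x \<in> fst P \<Longrightarrow> f x = x"
  shows "chain_image f u = u"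
  using chain_image_cong[OF assms, of id] assms(1) by (auto simp: subdiv_mem_iff)

lemma poset_iso_subdiv:
  assumes "poset_iso P Q"
  shows "poset_iso (subdiv P) (subdiv Q)"
proof -
  obtain f g where fg: "f ` fst P \<subseteq> fst Q" "g ` fst Q \<subseteq> fst P"
    "\<And>x. x \<in> fst P \<Longrightarrow> g (f x) = x" "\<And>y. y \<in> fst Q \<Longrightarrow> f (g y) = y"
    "monotone_on (fst P) (snd P) (snd Q) f" "monotone_on (fst Q) (snd Q) (snd P) g"
    using assms by (rule poset_isoE_inverses) blast
  show ?thesis
  proof (rule poset_isoI_inverses[where f = "chain_image f" and g = "chain_image g"])
    show "chain_image g (chain_image f u) = u" if "u \<in> fst (subdiv P)" for u
      using that fg(3) by (simp add: chain_image_comp chain_image_id)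
    show "chain_image f (chain_image g v) = v" if "v \<in> fst (subdiv Q)" for v
      using that fg(4) by (simp add: chain_image_comp chain_image_id)
    show "monotone_on (fst (subdiv P)) (snd (subdiv P)) (snd (subdiv Q)) (chain_image f)"
      "monotone_on (fst (subdiv Q)) (snd (subdiv Q)) (snd (subdiv P)) (chain_image g)"
      by (auto intro!: monotone_onI chain_image_mono)
    show "chain_image f ` fst (subdiv P) \<subseteq> fst (subdiv Q)"
      using chain_image_in_subdiv[OF _ fg(1,5)] by blast
    show "chain_image g ` fst (subdiv Q) \<subseteq> fst (subdiv P)"
      using chain_image_in_subdiv[OF _ fg(2,6)] by blast
  qed
qed

lemma subdiv_n_Suc: "subdiv_n (Suc n) P = subdiv_n n (subdiv P)"
  by (simp add: subdiv_n_def funpow_Suc_right del: funpow.simps)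

lemma poset_iso_subdiv_n: "poset_iso P Q \<Longrightarrow> poset_iso (subdiv_n n P) (subdiv_n n Q)"
  by (induction n) (simp_all add: subdiv_n_def poset_iso_subdiv)

lemma finite_chain_has_greatest:
  assumes "finite A" "A \<noteq> {}"
    and "\<And>x y. x \<in> A \<Longrightarrow> y \<in> A \<Longrightarrow> R x y \<or> R y x"
    and "\<And>x y z. x \<in> A \<Longrightarrow> y \<in> A \<Longrightarrow> z \<in> A \<Longrightarrow> R x y \<Longrightarrow> R y z \<Longrightarrow> R x z"
  shows "\<exists>m\<in>A. \<forall>x\<in>A. R x m"
  using assms
proof (induction A rule: finite_ne_induct)
  case (singleton x)
  then show ?case by blast
next
  case (insert x F)
  have "\<exists>m\<in>F. \<forall>y\<in>F. R y m"
    by (rule insert.IH) (use insert.prems in blast)+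
  then obtain m where m: "m \<in> F" "\<forall>y\<in>F. R y m"
    by blast
  show ?case
  proof (cases "R m x")
    case True
    have "R y x" if "y \<in> insert x F" for y
    proof (cases "y = x")
      case True
      then show ?thesis using insert.prems(1)[of x x] by simp
    next
      case False
      then show ?thesis using that insert.prems(2)[of y m x] m \<open>R m x\<close> by simp
    qed
    then show ?thesis by blast
  next
    case False
    then have "R x m" using insert.prems(1)[of x m] m(1) by simp
    then show ?thesis using m by auto
  qed
qed

locale finite_group_poset = group G for G :: "('g, 'm) monoid_scheme" (structure) +
  fixes act :: "'b \<Rightarrow> 'g \<Rightarrow> 'b" and C :: "'b set" and r :: "'b \<Rightarrow> 'b \<Rightarrow> bool"
  assumes G_poset: "G_poset G act C r" and finite_carrier: "finite (carrier G)"
begin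

lemma act_closed: "x \<in> C \<Longrightarrow> g \<in> carrier G \<Longrightarrow> act x g \<in> C"
  and act_one: "x \<in> C \<Longrightarrow> act x \<one> = x"
  and act_act: "x \<in> C \<Longrightarrow> g \<in> carrier G \<Longrightarrow> h \<in> carrier G \<Longrightarrow> act (act x g) h = act x (g \<otimes> h)"
  and act_mono: "x \<in> C \<Longrightarrow> y \<in> C \<Longrightarrow> g \<in> carrier G \<Longrightarrow> r x y \<Longrightarrow> r (act x g) (act y g)"
  and poset_refl: "x \<in> C \<Longrightarrow> r x x"
  and poset_antisym: "x \<in> C \<Longrightarrow> y \<in> C \<Longrightarrow> r x y \<Longrightarrow> r y x \<Longrightarrow> x = y"
  and poset_trans: "x \<in> C \<Longrightarrow> y \<in> C \<Longrightarrow> z \<in> C \<Longrightarrow> r x y \<Longrightarrow> r y z \<Longrightarrow> r x z"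
  using G_poset unfolding G_poset_def is_poset_def by blast+

lemma act_act_inv: "x \<in> C \<Longrightarrow> g \<in> carrier G \<Longrightarrow> act (act x g) (inv g) = x"
  by (simp add: act_act act_one)

lemma le_act_pow:
  assumes x: "x \<in> C" and h: "h \<in> carrier G" and le_xh: "r x (act x h)"
  shows "r x (act x (h [^] (j::nat)))"
proof (induction j)
  case 0
  then show ?case using x by (simp add: act_one poset_refl)
next
  case (Suc j)
  have "r (act x h) (act (act x (h [^] j)) h)"
    using act_mono[OF x act_closed[OF x] h Suc.IH] h by simp
  then have "r (act x h) (act x (h [^] Suc j))"
    using x h by (simp add: act_act)
  then show ?case
    using poset_trans[OF x act_closed[OF x h] act_closed[OF x]] le_xh h by simp
qed

lemma act_fixed_if_le:
  assumes x: "x \<in> C" and h: "h \<in> carrier G" and le_xh: "r x (act x h)"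
  shows "act x h = x"
proof -
  have ord: "Suc (ord h - 1) = ord h"
    using ord_ge_1[OF finite_carrier h] by simp
  have "r (act x h) (act (act x (h [^] (ord h - 1))) h)"
    using act_mono[OF x act_closed[OF x] h le_act_pow[OF x h le_xh]] h by simp
  also have "act (act x (h [^] (ord h - 1))) h = act x (h [^] ord h)"
    using x h ord nat_pow_Suc[of h "ord h - 1"] by (simp add: act_act)
  also have "\<dots> = x"
    using x h by (simp add: act_one)
  finally show ?thesis
    using poset_antisym[OF act_closed[OF x h] x] le_xh by blast
qed

lemma act_fixed_if_comparable:
  assumes x: "x \<in> C" and h: "h \<in> carrier G" and comp: "r x (act x h) \<or> r (act x h) x"
  shows "act x h = x"
  using comp
proof
  assume "r (act x h) x"
  then have "r x (act x (inv h))"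
    using act_mono[OF act_closed[OF x h] x inv_closed[OF h]] x h by (simp add: act_act_inv)
  then have "act x (inv h) = x"
    using act_fixed_if_le x h by simp
  then show ?thesis
    using act_act_inv[OF x inv_closed[OF h]] h by simp
qed (use act_fixed_if_le x h in blast)

definition orb :: "'b \<Rightarrow> 'b set" where
  "orb x = (\<lambda>g. act x g) ` carrier G"

lemma mem_orb_self: "x \<in> C \<Longrightarrow> x \<in> orb x"
  unfolding orb_def by (metis act_one image_eqI one_closed)

lemma orb_act:
  assumes x: "x \<in> C" and g: "g \<in> carrier G"
  shows "orb (act x g) = orb x"
proof
  show "orb (act x g) \<subseteq> orb x"
    using x g by (auto simp: orb_def act_act)
  show "orb x \<subseteq> orb (act x g)"
  proof
    fix y assume "y \<in> orb x"
    then obtain h where h: "h \<in> carrier G" "y = act x h"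
      by (auto simp: orb_def)
    then have "y = act (act x g) (inv g \<otimes> h)"
      using x g by (simp add: act_act m_assoc[symmetric])
    then show "y \<in> orb (act x g)"
      using g h by (auto simp: orb_def)
  qed
qed

lemma orb_eq_iff:
  assumes "x \<in> C" "y \<in> C"
  shows "orb x = orb y \<longleftrightarrow> (\<exists>g\<in>carrier G. y = act x g)"
  using assms mem_orb_self[of y] orb_act[of x] by (auto simp: orb_def)

definition ole :: "'b set \<Rightarrow> 'b set \<Rightarrow> bool" where
  "ole O1 O2 \<longleftrightarrow> (\<exists>y\<in>O1. \<exists>z\<in>O2. r y z)"

lemma orbit_poset_eq: "orbit_poset G act (C, r) = (orb ` C, ole)"
  by (simp add: orbit_poset_def orb_def ole_def fun_eq_iff)

lemma ole_orb_iff: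
  assumes x: "x \<in> C" and y: "y \<in> C"
  shows "ole (orb x) (orb y) \<longleftrightarrow> (\<exists>g\<in>carrier G. r x (act y g))"
proof
  assume "ole (orb x) (orb y)"
  then obtain a b where ab: "a \<in> carrier G" "b \<in> carrier G" "r (act x a) (act y b)"
    unfolding ole_def orb_def by blast
  then have "r (act (act x a) (inv a)) (act (act y b) (inv a))"
    using act_mono act_closed x y by blast
  then have "r x (act y (b \<otimes> inv a))"
    using x y ab by (simp add: act_act act_one)
  then show "\<exists>g\<in>carrier G. r x (act y g)"
    using ab by blast
next
  assume "\<exists>g\<in>carrier G. r x (act y g)"
  then show "ole (orb x) (orb y)"
    using mem_orb_self[OF x] unfolding ole_def orb_def by blast
qed

lemma ole_orb_refl: "x \<in> C \<Longrightarrow> ole (orb x) (orb x)"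
  using mem_orb_self poset_refl unfolding ole_def by blast

lemma ole_orb_trans:
  assumes x: "x \<in> C" and y: "y \<in> C" and z: "z \<in> C"
    and "ole (orb x) (orb y)" "ole (orb y) (orb z)"
  shows "ole (orb x) (orb z)"
proof -
  obtain g where g: "g \<in> carrier G" "r x (act y g)"
    using assms ole_orb_iff by blast
  obtain h where h: "h \<in> carrier G" "r y (act z h)"
    using assms ole_orb_iff by blast
  have "r (act y g) (act (act z h) g)"
    using act_mono[OF y act_closed[OF z h(1)] g(1) h(2)] .
  then have "r x (act z (h \<otimes> g))"
    using poset_trans act_closed x y z g h by (metis act_act)
  then show ?thesis
    using ole_orb_iff x z g h by blast
qed

lemma ole_orb_antisym:
  assumes x: "x \<in> C" and y: "y \<in> C"
    and "ole (orb x) (orb y)" "ole (orb y) (orb x)"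
  shows "orb x = orb y"
proof -
  obtain g where g: "g \<in> carrier G" "r x (act y g)"
    using assms ole_orb_iff by blast
  obtain h where h: "h \<in> carrier G" "r y (act x h)"
    using assms ole_orb_iff by blast
  have "r (act y g) (act x (h \<otimes> g))"
    using act_mono[OF y act_closed[OF x h(1)] g(1) h(2)] x g h by (simp add: act_act)
  then have "r x (act x (h \<otimes> g))"
    using poset_trans act_closed x y g h by (meson m_closed)
  then have "act x (h \<otimes> g) = x"
    using act_fixed_if_le x g h by blast
  then have "act y g = x"
    using poset_antisym act_closed \<open>r (act y g) (act x (h \<otimes> g))\<close> g x y by auto
  then show ?thesis
    using orb_act y g by blast
qed

lemma poset_iso_orbit_posetI:
  assumes onto: "\<Phi> ` C = fst Q"
    and antisym: "\<And>p q. p \<in> fst Q \<Longrightarrow> q \<in> fst Q \<Longrightarrow> snd Q p q \<Longrightarrow> snd Q q p \<Longrightarrow> p = q"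
    and ord: "\<And>u v. u \<in> C \<Longrightarrow> v \<in> C \<Longrightarrow> snd Q (\<Phi> u) (\<Phi> v) \<longleftrightarrow> ole (orb u) (orb v)"
  shows "poset_iso (orbit_poset G act (C, r)) Q"
proof -
  have \<Phi>_orb: "\<Phi> u = \<Phi> v" if "u \<in> C" "v \<in> C" "orb u = orb v" for u v
    using that antisym ord onto ole_orb_refl by (metis image_eqI)
  define f where "f Ob = \<Phi> (SOME u. u \<in> C \<and> Ob = orb u)" for Ob
  have f_orb: "f (orb u) = \<Phi> u" if "u \<in> C" for u
    using someI_ex[of "\<lambda>u'. u' \<in> C \<and> orb u = orb u'"] that \<Phi>_orb unfolding f_def by metis
  have "bij_betw f (orb ` C) (fst Q)"
  proof (rule bij_betw_imageI)
    show "inj_on f (orb ` C)"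
    proof (rule inj_onI)
      fix O1 O2 assume "O1 \<in> orb ` C" "O2 \<in> orb ` C" "f O1 = f O2"
      then obtain u v where "u \<in> C" "v \<in> C" "O1 = orb u" "O2 = orb v" "\<Phi> u = \<Phi> v"
        using f_orb by auto
      then show "O1 = O2"
        using ord ole_orb_antisym ole_orb_refl by metis
    qed
    show "f ` orb ` C = fst Q"
      using onto f_orb by (auto simp: image_image)
  qed
  then show ?thesis
    unfolding poset_iso_def orbit_poset_eq using ord f_orb by auto
qed

lemma chain_of_orbits_lifts:
  assumes "finite S" "is_chain (orb ` C) ole S"
  shows "\<exists>A. finite A \<and> is_chain C r A \<and> orb ` A = S"
  using assms
proof (induction S rule: finite_psubset_induct)
  case (psubset S)
  have S_orbits: "S \<subseteq> orb ` C" and S_total: "\<forall>N1\<in>S. \<forall>N2\<in>S. ole N1 N2 \<or> ole N2 N1"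
    using psubset.prems unfolding is_chain_def by blast+
  show ?case
  proof (cases "S = {}")
    case True
    then show ?thesis by (auto simp: is_chain_def)
  next
    case False
    have "\<exists>M\<in>S. \<forall>N\<in>S. ole N M"
    proof (rule finite_chain_has_greatest[OF psubset.hyps(1) False])
      show "ole N1 N2 \<or> ole N2 N1" if "N1 \<in> S" "N2 \<in> S" for N1 N2
        using S_total that by blast
      show "ole N1 N3" if N: "N1 \<in> S" "N2 \<in> S" "N3 \<in> S" "ole N1 N2" "ole N2 N3" for N1 N2 N3
      proof -
        obtain x y z where "x \<in> C" "y \<in> C" "z \<in> C" "N1 = orb x" "N2 = orb y" "N3 = orb z"
          using N(1-3) S_orbits by (meson imageE subsetD)
        then show ?thesis using ole_orb_trans N(4,5) by blast
      qed
    qed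
    then obtain M where M: "M \<in> S" "\<forall>N\<in>S. ole N M"
      by blast
    have "is_chain (orb ` C) ole (S - {M})"
      using psubset.prems unfolding is_chain_def by blast
    then obtain A where A: "finite A" "is_chain C r A" "orb ` A = S - {M}"
      using psubset.IH[of "S - {M}"] M(1) by blast
    have A_sub: "A \<subseteq> C"
      using A(2) unfolding is_chain_def by blast
    obtain z0 where z0: "z0 \<in> C" "M = orb z0"
      using M(1) S_orbits by blast
    obtain z where z: "z \<in> C" "orb z = M" "\<forall>x\<in>A. r x z"
    proof (cases "A = {}")
      case True
      then show ?thesis using that z0 by blast
    next
      case False
      have "\<exists>a\<in>A. \<forall>x\<in>A. r x a"
      proof (rule finite_chain_has_greatest[OF A(1) False])
        show "r x y \<or> r y x" if "x \<in> A" "y \<in> A" for x y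
          using A(2) that unfolding is_chain_def by blast
        show "r x z" if "x \<in> A" "y \<in> A" "z \<in> A" "r x y" "r y z" for x y z
          using poset_trans A_sub that by blast
      qed
      then obtain a where a: "a \<in> A" "\<forall>x\<in>A. r x a"
        by blast
      have "ole (orb a) (orb z0)"
        using a(1) A(3) M(2) z0(2) by blast
      then obtain g where g: "g \<in> carrier G" "r a (act z0 g)"
        using ole_orb_iff z0(1) a(1) A_sub by blast
      show ?thesis
      proof (rule that[of "act z0 g"])
        show "act z0 g \<in> C" "orb (act z0 g) = M"
          using z0 g act_closed orb_act by auto
        show "\<forall>x\<in>A. r x (act z0 g)"
          using a g A_sub poset_trans[OF _ _ act_closed[OF z0(1) g(1)]] by blast
      qed
    qed
    have "is_chain C r (insert z A)"
      using A(2) z poset_refl unfolding is_chain_def by blast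
    moreover have "orb ` insert z A = S"
      using A(3) z(2) M(1) by auto
    ultimately show ?thesis
      using A(1) by blast
  qed
qed

lemma act_eq_if_image_subset:
  assumes chain: "is_chain C r (A \<union> B)" and g: "g \<in> carrier G" and h: "h \<in> carrier G"
    and img: "(\<lambda>y. act y g) ` A \<subseteq> (\<lambda>y. act y h) ` B" and x: "x \<in> A"
  shows "act x g = act x h"
proof -
  obtain y where y: "y \<in> B" "act x g = act y h"
    using img x by blast
  have xC: "x \<in> C" and yC: "y \<in> C"
    using chain x y(1) unfolding is_chain_def by blast+
  have "act x (g \<otimes> inv h) = act (act y h) (inv h)"
    using xC g h y(2) by (simp add: act_act[symmetric])
  also have "\<dots> = y"
    using act_act_inv yC h by blast
  finally have xy: "act x (g \<otimes> inv h) = y" .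
  have "r x y \<or> r y x"
    using chain x y(1) unfolding is_chain_def by blast
  then have "y = x"
    using act_fixed_if_comparable[OF xC] xy g h by (metis inv_closed m_closed)
  then show ?thesis
    using y(2) by simp
qed

lemma property_B_moves_chain_into_chain:
  assumes B: "property_B G act C r" and A: "finite A" "is_chain C r A"
    and T: "is_chain C r T" and orbits: "orb ` A \<subseteq> orb ` T"
  shows "\<exists>g\<in>carrier G. (\<lambda>y. act y g) ` A \<subseteq> T"
proof (cases "A = {}")
  case True
  then show ?thesis by blast
next
  case False
  define n where "n = card A - 1"
  have "card A > 0"
    using False A(1) by (simp add: card_gt_0_iff)
  then have "{0..<card A} = {..n}"
    by (auto simp: n_def)
  then obtain e where e: "bij_betw e {..n} A"
    using ex_bij_betw_nat_finite[OF A(1)] by metis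
  have AC: "A \<subseteq> C" and TC: "T \<subseteq> C"
    using A(2) T unfolding is_chain_def by blast+
  have "\<exists>g\<in>carrier G. act (e i) g \<in> T" if "i \<in> {..n}" for i
  proof -
    have ei: "e i \<in> A" using e that by (simp add: bij_betw_apply)
    then obtain z where "z \<in> T" "orb (e i) = orb z"
      using orbits by blast
    then show ?thesis
      using orb_eq_iff[of "e i" z] ei AC TC by blast
  qed
  then obtain gs where gs: "\<forall>i\<in>{..n}. gs i \<in> carrier G \<and> act (e i) (gs i) \<in> T"
    by metis
  have "is_chain C r (e ` {..n})" "is_chain C r ((\<lambda>i. act (e i) (gs i)) ` {..n})"
    using A(2) T gs e unfolding is_chain_def bij_betw_def by auto
  then obtain g where g: "g \<in> carrier G" "\<forall>i\<in>{..n}. act (e i) (gs i) = act (e i) g"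
    using B gs e unfolding property_B_def bij_betw_def by blast
  have "(\<lambda>y. act y g) ` A \<subseteq> T"
    using g(2) gs bij_betw_imp_surj_on[OF e] by auto
  then show ?thesis
    using g(1) by blast
qed

lemma orbits_subset_iff_translate:
  assumes B: "property_B G act C r" and A: "finite A" "is_chain C r A" and T: "is_chain C r T"
  shows "orb ` A \<subseteq> orb ` T \<longleftrightarrow> (\<exists>g\<in>carrier G. A \<subseteq> (\<lambda>y. act y g) ` T)"
proof
  assume "orb ` A \<subseteq> orb ` T"
  then obtain g where g: "g \<in> carrier G" "(\<lambda>y. act y g) ` A \<subseteq> T"
    using property_B_moves_chain_into_chain[OF B A T] by blast
  have "A \<subseteq> (\<lambda>y. act y (inv g)) ` T"
  proof
    fix x assume "x \<in> A"
    then have "x = act (act x g) (inv g)" "act x g \<in> T"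
      using act_act_inv A(2) g unfolding is_chain_def by auto
    then show "x \<in> (\<lambda>y. act y (inv g)) ` T" by blast
  qed
  then show "\<exists>g\<in>carrier G. A \<subseteq> (\<lambda>y. act y g) ` T"
    using g(1) by blast
next
  assume "\<exists>g\<in>carrier G. A \<subseteq> (\<lambda>y. act y g) ` T"
  then obtain g where g: "g \<in> carrier G" "A \<subseteq> (\<lambda>y. act y g) ` T"
    by blast
  have "orb ` (\<lambda>y. act y g) ` T = orb ` T"
    using T g(1) orb_act unfolding is_chain_def by (auto simp: image_image)
  then show "orb ` A \<subseteq> orb ` T"
    using g(2) by (metis image_mono)
qed

end

lemma finite_group_posetI:
  "group G \<Longrightarrow> finite (carrier G) \<Longrightarrow> G_poset G act C r \<Longrightarrow> finite_group_poset G act C r"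
  by (simp add: finite_group_poset_def finite_group_poset_axioms_def)

lemma hf_act_Atom [simp]: "hf_act act (Atom x) g = Atom (act x g)"
  by (simp add: hf_act_def)

lemma hf_act_HSet: "hf_act act (HSet s) g = chain_image (\<lambda>y. hf_act act y g) (HSet s)"
  by (simp add: hf_act_def)

lemma is_poset_subdiv: "is_poset (fst (subdiv P)) (snd (subdiv P))"
  unfolding is_poset_def
proof (intro conjI ballI impI)
  fix x y z
  assume "x \<in> fst (subdiv P)" "y \<in> fst (subdiv P)"
  then obtain s t where st: "x = HSet s" "y = HSet t"
    unfolding subdiv_mem_iff by blast
  show "snd (subdiv P) x x"
    using st by simp
  show "x = y" if "snd (subdiv P) x y \<and> snd (subdiv P) y x"
    using that st by (simp add: fset_inject[symmetric] subset_antisym)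
  show "snd (subdiv P) x z"
    if z: "z \<in> fst (subdiv P)" and xyz: "snd (subdiv P) x y \<and> snd (subdiv P) y z"
  proof -
    obtain w where "z = HSet w"
      using z unfolding subdiv_mem_iff by blast
    then show ?thesis
      using xyz st by auto
  qed
qed

lemma fst_atoms [simp]: "fst (atoms P) = Atom ` fst P"
  by (simp add: atoms_def)

lemma snd_atoms_Atom [simp]: "snd (atoms P) (Atom x) (Atom y) = snd P x y"
  by (simp add: atoms_def)

locale finite_group_hf_poset = finite_group_poset G "hf_act act" Y r
  for G :: "('g, 'm) monoid_scheme" (structure) and act :: "'a \<Rightarrow> 'g \<Rightarrow> 'a"
    and Y :: "'a hf set" and r :: "'a hf \<Rightarrow> 'a hf \<Rightarrow> bool"
begin

lemma hf_act_subdiv: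
  "u \<in> fst (subdiv (Y, r)) \<Longrightarrow> hf_act act u g = chain_image (\<lambda>y. hf_act act y g) u"
  by (auto simp: subdiv_mem_iff hf_act_HSet simp del: chain_image_HSet)

lemma hf_act_subdiv_closed:
  "u \<in> fst (subdiv (Y, r)) \<Longrightarrow> g \<in> carrier G \<Longrightarrow> hf_act act u g \<in> fst (subdiv (Y, r))"
  unfolding hf_act_subdiv
  by (rule chain_image_in_subdiv) (auto simp: act_closed act_mono monotone_on_def)

lemma G_poset_subdiv: "G_poset G (hf_act act) (fst (subdiv (Y, r))) (snd (subdiv (Y, r)))"
  unfolding G_poset_def
proof (intro conjI ballI impI)
  show "is_poset (fst (subdiv (Y, r))) (snd (subdiv (Y, r)))"
    by (rule is_poset_subdiv)
  fix u v g h
  assume u: "u \<in> fst (subdiv (Y, r))"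
  show "hf_act act u \<one> = u"
    using chain_image_id[OF u, of "\<lambda>y. hf_act act y \<one>"] act_one by (simp add: hf_act_subdiv[OF u])
  assume g: "g \<in> carrier G"
  show "hf_act act u g \<in> fst (subdiv (Y, r))"
    using hf_act_subdiv_closed u g .
  { assume h: "h \<in> carrier G"
    have "hf_act act (hf_act act u g) h = chain_image (\<lambda>y. hf_act act y h) (hf_act act u g)"
      by (rule hf_act_subdiv[OF hf_act_subdiv_closed[OF u g]])
    also have "\<dots> = chain_image (\<lambda>y. hf_act act y h) (chain_image (\<lambda>y. hf_act act y g) u)"
      by (simp only: hf_act_subdiv[OF u])
    also have "\<dots> = chain_image ((\<lambda>y. hf_act act y h) \<circ> (\<lambda>y. hf_act act y g)) u"
      by (rule chain_image_comp[OF u])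
    also have "\<dots> = chain_image (\<lambda>y. hf_act act y (g \<otimes> h)) u"
      by (rule chain_image_cong[OF u]) (simp add: act_act g h)
    also have "\<dots> = hf_act act u (g \<otimes> h)"
      by (rule hf_act_subdiv[OF u, symmetric])
    finally show "hf_act act (hf_act act u g) h = hf_act act u (g \<otimes> h)" . }
  { assume "v \<in> fst (subdiv (Y, r))" "snd (subdiv (Y, r)) u v"
    then show "snd (subdiv (Y, r)) (hf_act act u g) (hf_act act v g)"
      using u by (simp add: hf_act_subdiv chain_image_mono) }
qed

(* The element g_m attached to the largest image v_m g_m serves every index i, by
   act_eq_if_image_subset. *)

lemma property_B_subdiv: "property_B G (hf_act act) (fst (subdiv (Y, r))) (snd (subdiv (Y, r)))"
  unfolding property_B_def
proof (intro allI impI)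
  fix n :: nat and v :: "nat \<Rightarrow> 'a hf" and gs :: "nat \<Rightarrow> 'g"
  assume "inj_on v {..n} \<and> (\<forall>i\<in>{..n}. gs i \<in> carrier G) \<and>
    is_chain (fst (subdiv (Y, r))) (snd (subdiv (Y, r))) (v ` {..n}) \<and>
    is_chain (fst (subdiv (Y, r))) (snd (subdiv (Y, r))) ((\<lambda>i. hf_act act (v i) (gs i)) ` {..n})"
  then have gs: "\<forall>i\<in>{..n}. gs i \<in> carrier G"
    and v_chain: "is_chain (fst (subdiv (Y, r))) (snd (subdiv (Y, r))) (v ` {..n})"
    and w_chain: "is_chain (fst (subdiv (Y, r))) (snd (subdiv (Y, r))) ((\<lambda>i. hf_act act (v i) (gs i)) ` {..n})"
    by blast+
  have "\<forall>i\<in>{..n}. v i \<in> fst (subdiv (Y, r))"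
    using v_chain unfolding is_chain_def by blast
  then have "\<forall>i\<in>{..n}. \<exists>s. v i = HSet s \<and> is_chain Y r (fset s)"
    unfolding subdiv_mem_iff by auto
  then obtain s where s: "\<forall>i\<in>{..n}. v i = HSet (s i) \<and> is_chain Y r (fset (s i))"
    by metis
  define im where "im i = (\<lambda>y. hf_act act y (gs i)) ` fset (s i)" for i
  have v_act: "hf_act act (v i) (gs i) = HSet ((\<lambda>y. hf_act act y (gs i)) |`| s i)" if "i \<in> {..n}" for i
    using s that by (simp add: hf_act_HSet)
  have union_chain: "is_chain Y r (fset (s i) \<union> fset (s j))" if "i \<in> {..n}" "j \<in> {..n}" for i j
  proof -
    have "snd (subdiv (Y, r)) (v i) (v j) \<or> snd (subdiv (Y, r)) (v j) (v i)"
      using v_chain that unfolding is_chain_def by blast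
    then have "fset (s i) \<union> fset (s j) = fset (s j) \<or> fset (s i) \<union> fset (s j) = fset (s i)"
      using s that by auto
    then show ?thesis
      using s that by auto
  qed
  have "\<exists>m\<in>{..n}. \<forall>i\<in>{..n}. im i \<subseteq> im m"
  proof (rule finite_chain_has_greatest)
    show "im i \<subseteq> im j \<or> im j \<subseteq> im i" if "i \<in> {..n}" "j \<in> {..n}" for i j
    proof -
      have "snd (subdiv (Y, r)) (hf_act act (v i) (gs i)) (hf_act act (v j) (gs j)) \<or>
          snd (subdiv (Y, r)) (hf_act act (v j) (gs j)) (hf_act act (v i) (gs i))"
        using w_chain that unfolding is_chain_def by blast
      then show ?thesis
        using v_act that by (simp add: im_def fimage.rep_eq)
    qed
    show "im i \<subseteq> im k" if "i \<in> {..n}" "j \<in> {..n}" "k \<in> {..n}" "im i \<subseteq> im j" "im j \<subseteq> im k"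
      for i j k
      using that(4,5) by (rule subset_trans)
  qed simp_all
  then obtain m where m: "m \<in> {..n}" "\<forall>i\<in>{..n}. im i \<subseteq> im m"
    by blast
  have "hf_act act (v i) (gs i) = hf_act act (v i) (gs m)" if i: "i \<in> {..n}" for i
  proof -
    have "\<forall>x\<in>fset (s i). hf_act act x (gs i) = hf_act act x (gs m)"
      using act_eq_if_image_subset[OF union_chain[OF i m(1)]] gs i m unfolding im_def by blast
    then have "(\<lambda>y. hf_act act y (gs i)) |`| s i = (\<lambda>y. hf_act act y (gs m)) |`| s i"
      by (intro fimage_cong) simp_all
    then show ?thesis
      using s i by (simp add: hf_act_HSet)
  qed
  then show "\<exists>g\<in>carrier G. \<forall>i\<in>{..n}. hf_act act (v i) (gs i) = hf_act act (v i) g"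
    using gs m(1) by blast
qed

end

sublocale finite_group_hf_poset \<subseteq> chains: finite_group_poset G "hf_act act"
  "fst (subdiv (Y, r))" "snd (subdiv (Y, r))"
  by (rule finite_group_poset.intro[OF is_group
        finite_group_poset_axioms.intro[OF G_poset_subdiv finite_carrier]])

context finite_group_hf_poset
begin

lemma chain_image_orb_onto:
  "chain_image (\<lambda>y. Atom (orb y)) ` fst (subdiv (Y, r))
     = fst (subdiv (atoms (orbit_poset G (hf_act act) (Y, r))))"
  unfolding orbit_poset_eq
proof
  have "monotone_on Y r (snd (atoms (orb ` Y, ole))) (\<lambda>y. Atom (orb y))"
    using mem_orb_self by (auto simp: monotone_on_def ole_def)
  then show "chain_image (\<lambda>y. Atom (orb y)) ` fst (subdiv (Y, r)) \<subseteq> fst (subdiv (atoms (orb ` Y, ole)))"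
    using chain_image_in_subdiv[of _ "(Y, r)" "\<lambda>y. Atom (orb y)" "atoms (orb ` Y, ole)"] by auto
next
  show "fst (subdiv (atoms (orb ` Y, ole))) \<subseteq> chain_image (\<lambda>y. Atom (orb y)) ` fst (subdiv (Y, r))"
  proof
    fix w assume "w \<in> fst (subdiv (atoms (orb ` Y, ole)))"
    then obtain T where T: "w = HSet T" "T \<noteq> {||}"
      "is_chain (Atom ` orb ` Y) (snd (atoms (orb ` Y, ole))) (fset T)"
      unfolding subdiv_mem_iff by auto
    define S where "S = Atom -` fset T"
    have T_S: "fset T = Atom ` S"
      using T(3) unfolding is_chain_def S_def by auto
    have "finite S"
      unfolding S_def by (rule finite_vimageI) (auto simp: inj_def)
    moreover have "is_chain (orb ` Y) ole S"
      using T(3) unfolding T_S is_chain_def by (auto simp: inj_image_subset_iff inj_def)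
    ultimately obtain A where A: "finite A" "is_chain Y r A" "orb ` A = S"
      using chain_of_orbits_lifts by blast
    have "A \<noteq> {}"
      using T(2) T_S A(3) by auto
    then have "HSet (Abs_fset A) \<in> fst (subdiv (Y, r))"
      using A(1,2) unfolding subdiv_mem_iff by (auto simp: Abs_fset_inverse)
    moreover have "chain_image (\<lambda>y. Atom (orb y)) (HSet (Abs_fset A)) = w"
      using A(1) T(1) T_S
      by (simp add: fset_inject[symmetric] fimage.rep_eq Abs_fset_inverse image_image flip: A(3))
    ultimately show "w \<in> chain_image (\<lambda>y. Atom (orb y)) ` fst (subdiv (Y, r))"
      by blast
  qed
qed

lemma chain_image_orb_le_iff:
  assumes B: "property_B G (hf_act act) Y r"
    and u: "u \<in> fst (subdiv (Y, r))" and v: "v \<in> fst (subdiv (Y, r))"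
  shows "snd (subdiv (atoms (orbit_poset G (hf_act act) (Y, r))))
      (chain_image (\<lambda>y. Atom (orb y)) u) (chain_image (\<lambda>y. Atom (orb y)) v)
    \<longleftrightarrow> chains.ole (chains.orb u) (chains.orb v)"
proof -
  obtain s t where st: "u = HSet s" "v = HSet t" "is_chain Y r (fset s)" "is_chain Y r (fset t)"
    using u v unfolding subdiv_mem_iff by auto
  have "snd (subdiv (atoms (orbit_poset G (hf_act act) (Y, r))))
      (chain_image (\<lambda>y. Atom (orb y)) u) (chain_image (\<lambda>y. Atom (orb y)) v)
    \<longleftrightarrow> orb ` fset s \<subseteq> orb ` fset t"
    using st by (simp add: fimage.rep_eq image_image[symmetric] inj_image_subset_iff inj_def
        del: image_image)
  also have "\<dots> \<longleftrightarrow> (\<exists>g\<in>carrier G. fset s \<subseteq> (\<lambda>y. hf_act act y g) ` fset t)"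
    using orbits_subset_iff_translate[OF B _ st(3,4)] by simp
  also have "\<dots> \<longleftrightarrow> (\<exists>g\<in>carrier G. snd (subdiv (Y, r)) u (hf_act act v g))"
    using st by (simp add: hf_act_HSet fimage.rep_eq)
  also have "\<dots> \<longleftrightarrow> chains.ole (chains.orb u) (chains.orb v)"
    using chains.ole_orb_iff[OF u v] by simp
  finally show ?thesis .
qed

lemma poset_iso_orbit_poset_subdiv:
  assumes "property_B G (hf_act act) Y r"
  shows "poset_iso (orbit_poset G (hf_act act) (subdiv (Y, r)))
    (subdiv (atoms (orbit_poset G (hf_act act) (Y, r))))"
proof -
  let ?Q = "subdiv (atoms (orbit_poset G (hf_act act) (Y, r)))"
  have "is_poset (fst ?Q) (snd ?Q)"
    by (rule is_poset_subdiv)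
  then have "poset_iso (orbit_poset G (hf_act act) (fst (subdiv (Y, r)), snd (subdiv (Y, r)))) ?Q"
    unfolding is_poset_def
    by (intro chains.poset_iso_orbit_posetI[OF chain_image_orb_onto _ chain_image_orb_le_iff[OF assms]])
      blast+
  then show ?thesis
    by simp
qed

end

lemma ball_Atom_image: "(\<forall>u\<in>Atom ` X. P u) \<longleftrightarrow> (\<forall>x\<in>X. P (Atom x))"
  by blast

lemma is_chain_atoms_iff:
  "is_chain (fst (atoms P)) (snd (atoms P)) (Atom ` S) \<longleftrightarrow> is_chain (fst P) (snd P) S"
  unfolding is_chain_def by (auto simp: inj_image_subset_iff inj_def)

lemma G_poset_atoms:
  "G_poset G act X r \<Longrightarrow> G_poset G (hf_act act) (fst (atoms (X, r))) (snd (atoms (X, r)))"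
  unfolding G_poset_def is_poset_def fst_atoms ball_Atom_image snd_atoms_Atom hf_act_Atom fst_conv snd_conv
  by (elim conjE) (intro conjI; blast)

lemma property_B_atoms:
  fixes G :: "('g, 'm) monoid_scheme" and act :: "'a \<Rightarrow> 'g \<Rightarrow> 'a"
  assumes B: "property_B G act X r"
  shows "property_B G (hf_act act) (fst (atoms (X, r))) (snd (atoms (X, r)))"
  unfolding property_B_def
proof (intro allI impI)
  fix n :: nat and v :: "nat \<Rightarrow> 'a hf" and gs :: "nat \<Rightarrow> 'g"
  assume "inj_on v {..n} \<and> (\<forall>i\<in>{..n}. gs i \<in> carrier G) \<and>
    is_chain (fst (atoms (X, r))) (snd (atoms (X, r))) (v ` {..n}) \<and>
    is_chain (fst (atoms (X, r))) (snd (atoms (X, r))) ((\<lambda>i. hf_act act (v i) (gs i)) ` {..n})"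
  then have inj: "inj_on v {..n}" and gs: "\<forall>i\<in>{..n}. gs i \<in> carrier G"
    and v_chain: "is_chain (fst (atoms (X, r))) (snd (atoms (X, r))) (v ` {..n})"
    and w_chain: "is_chain (fst (atoms (X, r))) (snd (atoms (X, r))) ((\<lambda>i. hf_act act (v i) (gs i)) ` {..n})"
    by blast+
  have "\<forall>i\<in>{..n}. \<exists>x. v i = Atom x"
    using v_chain unfolding is_chain_def by auto
  then obtain x where x: "\<forall>i\<in>{..n}. v i = Atom (x i)"
    by metis
  have v_eq: "v ` {..n} = Atom ` x ` {..n}"
    and w_eq: "(\<lambda>i. hf_act act (v i) (gs i)) ` {..n} = Atom ` (\<lambda>i. act (x i) (gs i)) ` {..n}"
    using x by (auto simp: image_iff)
  have "inj_on x {..n}"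
    using inj x by (auto simp: inj_on_def)
  moreover have "is_chain X r (x ` {..n})" "is_chain X r ((\<lambda>i. act (x i) (gs i)) ` {..n})"
    using v_chain w_chain unfolding v_eq w_eq is_chain_atoms_iff by simp_all
  ultimately obtain g where "g \<in> carrier G" "\<forall>i\<in>{..n}. act (x i) (gs i) = act (x i) g"
    using B gs unfolding property_B_def by blast
  then show "\<exists>g\<in>carrier G. \<forall>i\<in>{..n}. hf_act act (v i) (gs i) = hf_act act (v i) g"
    using x by auto
qed

lemma poset_iso_orbit_poset_atoms:
  assumes "group G" "finite (carrier G)" "G_poset G act X r"
  shows "poset_iso (orbit_poset G (hf_act act) (atoms (X, r))) (orbit_poset G act (X, r))"
proof -
  interpret X: finite_group_poset G act X r
    using assms by (rule finite_group_posetI)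
  interpret A: finite_group_poset G "hf_act act" "fst (atoms (X, r))" "snd (atoms (X, r))"
    using assms(1,2) G_poset_atoms[OF assms(3)] by (rule finite_group_posetI)
  have "poset_iso (orbit_poset G (hf_act act) (fst (atoms (X, r)), snd (atoms (X, r))))
      (orbit_poset G act (X, r))"
  proof (rule A.poset_iso_orbit_posetI[where \<Phi> = "\<lambda>u. X.orb (case u of Atom x \<Rightarrow> x)"])
    show "(\<lambda>u. X.orb (case u of Atom x \<Rightarrow> x)) ` fst (atoms (X, r)) = fst (orbit_poset G act (X, r))"
      by (auto simp: X.orbit_poset_eq image_image)
    show "p = q" if "p \<in> fst (orbit_poset G act (X, r))" "q \<in> fst (orbit_poset G act (X, r))"
      "snd (orbit_poset G act (X, r)) p q" "snd (orbit_poset G act (X, r)) q p" for p q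
      using that X.ole_orb_antisym by (auto simp: X.orbit_poset_eq)
    show "snd (orbit_poset G act (X, r)) (X.orb (case u of Atom x \<Rightarrow> x)) (X.orb (case v of Atom x \<Rightarrow> x))
        \<longleftrightarrow> A.ole (A.orb u) (A.orb v)" if "u \<in> fst (atoms (X, r))" "v \<in> fst (atoms (X, r))" for u v
      using that by (auto simp: X.orbit_poset_eq X.ole_orb_iff A.ole_orb_iff)
  qed
  then show ?thesis
    by (simp only: prod.collapse)
qed

lemma poset_iso_orbit_poset_subdiv_n:
  assumes "group G" "finite (carrier G)"
    and "G_poset G (hf_act act) Y r" "property_B G (hf_act act) Y r"
  shows "poset_iso (orbit_poset G (hf_act act) (subdiv_n n (Y, r)))
    (subdiv_n n (atoms (orbit_poset G (hf_act act) (Y, r))))"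
  using assms(3,4)
proof (induction n arbitrary: Y r)
  case 0
  then show ?case
    by (simp add: subdiv_n_def poset_iso_atoms)
next
  case (Suc n)
  interpret finite_group_hf_poset G act Y r
    unfolding finite_group_hf_poset_def using assms(1,2) Suc.prems(1) by (rule finite_group_posetI)
  let ?O = "orbit_poset G (hf_act act)"
  have "poset_iso (?O (subdiv_n n (subdiv (Y, r)))) (subdiv_n n (atoms (?O (subdiv (Y, r)))))"
    using Suc.IH[OF G_poset_subdiv property_B_subdiv] by simp
  also have "poset_iso \<dots> (subdiv_n n (atoms (subdiv (atoms (?O (Y, r))))))"
    by (intro poset_iso_subdiv_n poset_iso_atoms_cong poset_iso_orbit_poset_subdiv Suc.prems(2))
  also have "poset_iso \<dots> (subdiv_n n (subdiv (atoms (?O (Y, r)))))"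
    by (intro poset_iso_subdiv_n poset_iso_sym[OF poset_iso_atoms])
  finally show ?case
    by (simp add: subdiv_n_Suc)
qed

theorem corollary2p10:
  fixes G :: "('g, 'm) monoid_scheme" and X :: "'a set" and r :: "'a \<Rightarrow> 'a \<Rightarrow> bool"
    and act :: "'a \<Rightarrow> 'g \<Rightarrow> 'a"
  assumes "group G" and "finite (carrier G)" and "finite X" and "G_poset G act X r"
  shows "(\<forall>n\<ge>1. poset_iso
            (orbit_poset G (hf_act act) (subdiv_n n (atoms (X, r))))
            (subdiv_n (n - 1) (atoms (orbit_poset G (hf_act act) (subdiv (atoms (X, r)))))))
       \<and> (property_B G act X r \<longrightarrow>
          (\<forall>n. poset_iso
            (orbit_poset G (hf_act act) (subdiv_n n (atoms (X, r))))
            (subdiv_n n (atoms (orbit_poset G act (X, r))))))"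
proof -
  let ?P = "atoms (X, r)"
  let ?O = "orbit_poset G (hf_act act)"
  have P: "G_poset G (hf_act act) (fst ?P) (snd ?P)"
    using G_poset_atoms[OF assms(4)] .
  interpret finite_group_hf_poset G act "fst ?P" "snd ?P"
    unfolding finite_group_hf_poset_def using assms(1,2) P by (rule finite_group_posetI)
  have part1: "poset_iso (?O (subdiv_n n ?P)) (subdiv_n (n - 1) (atoms (?O (subdiv ?P))))"
    if n_pos: "n \<ge> 1" for n
  proof -
    obtain m where n: "n = Suc m"
      using n_pos by (cases n) auto
    show ?thesis
      using poset_iso_orbit_poset_subdiv_n[OF assms(1,2) G_poset_subdiv property_B_subdiv, of m]
      unfolding n by (simp only: prod.collapse subdiv_n_Suc diff_Suc_1)
  qed
  have part2: "poset_iso (?O (subdiv_n n ?P)) (subdiv_n n (atoms (orbit_poset G act (X, r))))"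
    if B: "property_B G act X r" for n
  proof -
    have "poset_iso (?O (subdiv_n n ?P)) (subdiv_n n (atoms (?O ?P)))"
      using poset_iso_orbit_poset_subdiv_n[OF assms(1,2) P property_B_atoms[OF B]]
      by (simp only: prod.collapse)
    also have "poset_iso \<dots> (subdiv_n n (atoms (orbit_poset G act (X, r))))"
      by (intro poset_iso_subdiv_n poset_iso_atoms_cong poset_iso_orbit_poset_atoms assms(1,2,4))
    finally show ?thesis .
  qed
  show ?thesis
    by (intro conjI allI impI part1 part2)
qed

end
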